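(* Under Assumptions (A) and (C), there exists $c_0>0$ such that for every $t\in[0,T]$, $$\langle f,2\Lambda f+(\boldsymbol B_t+(\bar{\boldsymbol B}_t)^* )f\rangle_{L^2,N}\ge c_0\langle f,f\rangle_{L^2,N}\qquad\text{for all }f\in L^2([0,T],\mathbb R^N).$$
   Context: $\langle f,g\rangle_{L^2,N}=\int_0^Tf^\top g\,dt$; kernels $G\in L^2([0,T]^2,\mathbb R^{N\times N})$ induce $(\boldsymbol Gf)(t)=\int_0^TG(t,s)f(s)ds$, $\boldsymbol G^*$ induced by $G(s,t)^\top$; Volterra kernel: $G(t,s)=0$ for $s\ge t$; $\mathcal G$: real Volterra kernels in $L^2([0,T]^2)$. Assumption (A) (relevant part): $\lambda^i>0$ for $i=1,\dots,N$; $B^{ij},\bar B^{ij}\in\mathcal G$ for all $i,j$, with $\bar B^{ii}=B^{ii}$; $B=(B^{ij})_{i,j}$, $\bar B=(\bar B^{ij})_{i,j}$, $\Lambda=\mathrm{diag}(\lambda^1,\dots,\lambda^N)$. Assumption (C): $\exists c_0>0$ with $\langle f,(\boldsymbol B+\bar{\boldsymbol B}^* )f+2\Lambda f-c_0f\rangle_{L^2,N}\ge0$ for all $f$. Truncation: $G_t(s,r)=\mathbb 1_{\{r>t\}}G(s,r)$ with induced operator $\boldsymbol G_t$; $(\bar{\boldsymbol B}_t)^*$ is the adjoint of $\bar{\boldsymbol B}_t$. *)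

theory Defs
  imports "HOL-Analysis.Analysis"
begin

text \<open>Matrix kernels are
G :: 'n => 'n => real => real => real with G i j t s the (i,j) entry of G(t,s).\<close>

definition L2fun :: "real \<Rightarrow> (real \<Rightarrow> real) \<Rightarrow> bool" where
  "L2fun T g \<longleftrightarrow> set_borel_measurable lborel {0..T} g
      \<and> set_integrable lborel {0..T} (\<lambda>t. (g t)\<^sup>2)"

definition L2vec :: "real \<Rightarrow> (real \<Rightarrow> 'n::finite \<Rightarrow> real) \<Rightarrow> bool" where
  "L2vec T f \<longleftrightarrow> (\<forall>i. L2fun T (\<lambda>t. f t i))"

definition L2kernel :: "real \<Rightarrow> (real \<Rightarrow> real \<Rightarrow> real) \<Rightarrow> bool" where
  "L2kernel T G \<longleftrightarrow> set_borel_measurable lborel ({0..T} \<times> {0..T}) (\<lambda>(t, s). G t s)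
      \<and> set_integrable lborel ({0..T} \<times> {0..T}) (\<lambda>(t, s). (G t s)\<^sup>2)"

definition volterra :: "(real \<Rightarrow> real \<Rightarrow> real) \<Rightarrow> bool" where
  "volterra G \<longleftrightarrow> (\<forall>t s. t \<le> s \<longrightarrow> G t s = 0)"

definition volterra_L2 :: "real \<Rightarrow> (real \<Rightarrow> real \<Rightarrow> real) \<Rightarrow> bool" where
  "volterra_L2 T G \<longleftrightarrow> L2kernel T G \<and> volterra G"

definition ipL2 :: "real \<Rightarrow> (real \<Rightarrow> 'n::finite \<Rightarrow> real) \<Rightarrow> (real \<Rightarrow> 'n \<Rightarrow> real) \<Rightarrow> real" where
  "ipL2 T f g = (LINT t:{0..T}|lborel. (\<Sum>i\<in>UNIV. f t i * g t i))"

definition kop :: "real \<Rightarrow> ('n::finite \<Rightarrow> 'n \<Rightarrow> real \<Rightarrow> real \<Rightarrow> real)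
    \<Rightarrow> (real \<Rightarrow> 'n \<Rightarrow> real) \<Rightarrow> (real \<Rightarrow> 'n \<Rightarrow> real)" where
  "kop T G f = (\<lambda>t i. \<Sum>j\<in>UNIV. LINT s:{0..T}|lborel. G i j t s * f s j)"

definition kadj :: "real \<Rightarrow> ('n::finite \<Rightarrow> 'n \<Rightarrow> real \<Rightarrow> real \<Rightarrow> real)
    \<Rightarrow> (real \<Rightarrow> 'n \<Rightarrow> real) \<Rightarrow> (real \<Rightarrow> 'n \<Rightarrow> real)" where
  "kadj T G = kop T (\<lambda>i j t s. G j i s t)"

definition ktrunc :: "real \<Rightarrow> ('n \<Rightarrow> 'n \<Rightarrow> real \<Rightarrow> real \<Rightarrow> real)
    \<Rightarrow> ('n \<Rightarrow> 'n \<Rightarrow> real \<Rightarrow> real \<Rightarrow> real)" where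
  "ktrunc t G = (\<lambda>i j s r. if r > t then G i j s r else 0)"

end

theory Submission
  imports Defs
begin

(* Fix t and let g agree with f on (t,T] and vanish on [0,t]. Since B and Bbar are
   Volterra kernels, the truncated operators only see g: pointwise,
   f . (B_t + (Bbar_t)^* ) f = g . (B + Bbar^* ) g. So the truncated form equals the form of
   assumption (C) at g, which is at least c0 |g|^2, plus 2 <f - g, Lambda (f - g)>, which is
   at least 2 (min lambda) |f - g|^2. Hence min(c0, 2 min lambda) is a coercivity constant
   uniform in t. *)

lemma set_integrable_sum:
  fixes f :: "'i \<Rightarrow> 'a \<Rightarrow> 'b::{banach, second_countable_topology}"
  assumes "\<And>i. i \<in> I \<Longrightarrow> set_integrable M A (f i)"
  shows "set_integrable M A (\<lambda>x. \<Sum>i\<in>I. f i x)"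
  using assms unfolding set_integrable_def scaleR_sum_right by (auto intro!: integrable_sum)

lemma (in pair_sigma_finite) integrable_tensor_product:
  fixes a b :: "_ \<Rightarrow> real"
  assumes a: "integrable M1 a" and b: "integrable M2 b"
  shows "integrable (M1 \<Otimes>\<^sub>M M2) (\<lambda>x. a (fst x) * b (snd x))"
proof -
  have [measurable]: "a \<in> borel_measurable M1" "b \<in> borel_measurable M2"
    using a b by auto
  have "(\<integral>\<^sup>+x. ennreal (norm (a (fst x) * b (snd x))) \<partial>(M1 \<Otimes>\<^sub>M M2))
      = (\<integral>\<^sup>+x. \<integral>\<^sup>+y. ennreal (norm (a x)) * ennreal (norm (b y)) \<partial>M2 \<partial>M1)"
    by (simp add: M2.nn_integral_fst[symmetric] abs_mult ennreal_mult)
  also have "\<dots> = (\<integral>\<^sup>+x. ennreal (norm (a x)) \<partial>M1) * (\<integral>\<^sup>+y. ennreal (norm (b y)) \<partial>M2)"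
    by (simp add: nn_integral_cmult nn_integral_multc)
  also have "\<dots> < \<infinity>"
    using a b unfolding integrable_iff_bounded by (simp add: ennreal_mult_less_top)
  finally show ?thesis
    unfolding integrable_iff_bounded by simp
qed

lemma (in pair_sigma_finite) integrable_kernel_bilinear:
  fixes k :: "_ \<times> _ \<Rightarrow> real"
  assumes [measurable]: "k \<in> borel_measurable (M1 \<Otimes>\<^sub>M M2)"
    and k: "integrable (M1 \<Otimes>\<^sub>M M2) (\<lambda>x. (k x)\<^sup>2)"
    and [measurable]: "u \<in> borel_measurable M1" and u: "integrable M1 (\<lambda>s. (u s)\<^sup>2)"
    and [measurable]: "v \<in> borel_measurable M2" and v: "integrable M2 (\<lambda>r. (v r)\<^sup>2)"
  shows "integrable M1 (\<lambda>s. \<integral>r. u s * k (s, r) * v r \<partial>M2)"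
proof -
  have "integrable (M1 \<Otimes>\<^sub>M M2) (\<lambda>x. u (fst x) * k x * v (snd x))"
  proof (rule Bochner_Integration.integrable_bound)
    show "integrable (M1 \<Otimes>\<^sub>M M2) (\<lambda>x. (k x)\<^sup>2 + (u (fst x))\<^sup>2 * (v (snd x))\<^sup>2)"
      using k integrable_tensor_product[OF u v] by simp
    show "AE x in M1 \<Otimes>\<^sub>M M2. norm (u (fst x) * k x * v (snd x))
        \<le> norm ((k x)\<^sup>2 + (u (fst x))\<^sup>2 * (v (snd x))\<^sup>2)"
    proof (rule AE_I2)
      fix x
      have "2 * (\<bar>k x\<bar> * \<bar>u (fst x) * v (snd x)\<bar>) \<le> (k x)\<^sup>2 + (u (fst x) * v (snd x))\<^sup>2"
        using sum_squares_bound[of "\<bar>k x\<bar>" "\<bar>u (fst x) * v (snd x)\<bar>"] by simp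
      moreover have "0 \<le> \<bar>k x\<bar> * \<bar>u (fst x) * v (snd x)\<bar>"
        by simp
      moreover have "norm (u (fst x) * k x * v (snd x)) = \<bar>k x\<bar> * \<bar>u (fst x) * v (snd x)\<bar>"
        by (simp add: abs_mult)
      moreover have "norm ((k x)\<^sup>2 + (u (fst x))\<^sup>2 * (v (snd x))\<^sup>2) = (k x)\<^sup>2 + (u (fst x) * v (snd x))\<^sup>2"
        by (simp add: power_mult_distrib)
      ultimately show "norm (u (fst x) * k x * v (snd x)) \<le> norm ((k x)\<^sup>2 + (u (fst x))\<^sup>2 * (v (snd x))\<^sup>2)"
        by linarith
    qed
  qed simp
  from integrable_fst'[OF this] show ?thesis by simp
qed

lemma L2fun_zero_extension:
  assumes "L2fun T g"
  shows "(\<lambda>s. indicator {0..T} s * g s) \<in> borel_measurable lborel"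
    and "integrable lborel (\<lambda>s. (indicator {0..T} s * g s)\<^sup>2)"
proof -
  have "(\<lambda>s. indicator {0..T} s *\<^sub>R (g s)\<^sup>2) = (\<lambda>s. (indicator {0..T} s * g s)\<^sup>2)"
    by (auto simp: fun_eq_iff indicator_def)
  with assms show "(\<lambda>s. indicator {0..T} s * g s) \<in> borel_measurable lborel"
    and "integrable lborel (\<lambda>s. (indicator {0..T} s * g s)\<^sup>2)"
    unfolding L2fun_def set_borel_measurable_def set_integrable_def by auto
qed

lemma L2fun_truncate:
  assumes "L2fun T g"
  shows "L2fun T (\<lambda>s. if t < s then g s else 0)"
proof -
  have m: "(\<lambda>s. indicator {0..T} s * g s) \<in> borel_measurable lborel"
    and i: "integrable lborel (\<lambda>s. indicator {0..T} s * (g s)\<^sup>2)"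
    using assms unfolding L2fun_def set_borel_measurable_def set_integrable_def by auto
  have "(\<lambda>s. indicator {0..T} s *\<^sub>R (if t < s then g s else 0))
      = (\<lambda>s. indicator {t<..} s * (indicator {0..T} s * g s))"
    by (auto simp: fun_eq_iff indicator_def)
  with m have "set_borel_measurable lborel {0..T} (\<lambda>s. if t < s then g s else 0)"
    unfolding set_borel_measurable_def by simp
  moreover have "integrable lborel (\<lambda>s. indicator {0..T} s *\<^sub>R (if t < s then g s else 0)\<^sup>2)"
  proof (rule Bochner_Integration.integrable_bound[OF i])
    have "(\<lambda>s. indicator {0..T} s *\<^sub>R (if t < s then g s else 0)\<^sup>2)
        = (\<lambda>s. indicator {t<..} s * (indicator {0..T} s * g s)\<^sup>2)"
      by (auto simp: fun_eq_iff indicator_def)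
    with m show "(\<lambda>s. indicator {0..T} s *\<^sub>R (if t < s then g s else 0)\<^sup>2) \<in> borel_measurable lborel"
      by simp
  qed (auto simp: indicator_def)
  ultimately show ?thesis
    unfolding L2fun_def set_integrable_def by auto
qed

lemma L2kernel_transpose:
  assumes "L2kernel T K"
  shows "L2kernel T (\<lambda>t s. K s t)"
proof -
  let ?S = "{0..T} \<times> {0..T}"
  have swap: "(\<lambda>x. indicator ?S x *\<^sub>R (case x of (t, s) \<Rightarrow> F s t))
      = (\<lambda>(x, y). indicator ?S (y, x) *\<^sub>R (case (y, x) of (t, s) \<Rightarrow> F t s))" for F :: "real \<Rightarrow> real \<Rightarrow> real"
    by (auto simp: fun_eq_iff indicator_def)
  have indicator_swap: "indicator ?S (snd x, fst x) = (indicator ?S x :: real)" for x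
    by (cases x) (auto simp: indicator_def)
  from assms have "(\<lambda>x. indicator ?S x *\<^sub>R (case x of (t, s) \<Rightarrow> K t s)) \<in> borel_measurable (lborel \<Otimes>\<^sub>M lborel)"
    and "integrable (lborel \<Otimes>\<^sub>M lborel) (\<lambda>x. indicator ?S x *\<^sub>R (case x of (t, s) \<Rightarrow> (K t s)\<^sup>2))"
    unfolding L2kernel_def set_borel_measurable_def set_integrable_def lborel_prod by auto
  from measurable_comp[OF measurable_pair_swap' this(1)]
    and lborel_pair.integrable_product_swap[OF this(2)]
  show ?thesis
    unfolding L2kernel_def set_borel_measurable_def set_integrable_def swap lborel_prod[symmetric]
    by (simp_all add: comp_def split_beta' indicator_swap)
qed

lemma set_integrable_kernel_term:
  assumes K: "L2kernel T K" and a: "L2fun T a" and b: "L2fun T b"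
  shows "set_integrable lborel {0..T} (\<lambda>s. a s * (LINT r:{0..T}|lborel. K s r * b r))"
proof -
  let ?S = "{0..T} \<times> {0..T}"
  define k where "k x = indicator ?S x * K (fst x) (snd x)" for x
  have "(\<lambda>x. indicator ?S x *\<^sub>R (case x of (t, s) \<Rightarrow> K t s)) = k"
    and "(\<lambda>x. indicator ?S x *\<^sub>R (case x of (t, s) \<Rightarrow> (K t s)\<^sup>2)) = (\<lambda>x. (k x)\<^sup>2)"
    by (auto simp: fun_eq_iff k_def indicator_def split: prod.splits)
  with K have "k \<in> borel_measurable (lborel \<Otimes>\<^sub>M lborel)"
    and "integrable (lborel \<Otimes>\<^sub>M lborel) (\<lambda>x. (k x)\<^sup>2)"
    unfolding L2kernel_def set_borel_measurable_def set_integrable_def lborel_prod by auto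
  from lborel_pair.integrable_kernel_bilinear[OF this L2fun_zero_extension[OF a] L2fun_zero_extension[OF b]]
  have "integrable lborel
      (\<lambda>s. LINT r|lborel. indicator {0..T} s * a s * k (s, r) * (indicator {0..T} r * b r))" .
  moreover have "(LINT r|lborel. indicator {0..T} s * a s * k (s, r) * (indicator {0..T} r * b r))
      = indicator {0..T} s *\<^sub>R (a s * (LINT r:{0..T}|lborel. K s r * b r))" for s
  proof -
    have "(\<lambda>r. indicator {0..T} s * a s * k (s, r) * (indicator {0..T} r * b r))
        = (\<lambda>r. indicator {0..T} s * a s * (indicator {0..T} r *\<^sub>R (K s r * b r)))"
      by (auto simp: fun_eq_iff k_def indicator_def)
    then show ?thesis
      by (simp add: set_lebesgue_integral_def)
  qed
  ultimately show ?thesis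
    unfolding set_integrable_def by simp
qed

lemma L2fun_set_integrable_square:
  "L2fun T a \<Longrightarrow> set_integrable lborel {0..T} (\<lambda>s. a s * a s)"
  unfolding L2fun_def by (simp add: power2_eq_square)

definition vtrunc :: "real \<Rightarrow> (real \<Rightarrow> 'n \<Rightarrow> real) \<Rightarrow> (real \<Rightarrow> 'n \<Rightarrow> real)" where
  "vtrunc t f = (\<lambda>s i. if t < s then f s i else 0)"

lemma L2vec_vtrunc: "L2vec T f \<Longrightarrow> L2vec T (vtrunc t f)"
  unfolding L2vec_def vtrunc_def by (auto intro: L2fun_truncate)

lemma kadj_apply: "kadj T G f s i = (\<Sum>j\<in>UNIV. LINT r:{0..T}|lborel. G j i r s * f r j)"
  by (simp add: kadj_def kop_def)

lemma kop_ktrunc: "kop T (ktrunc t G) f = kop T G (vtrunc t f)"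
proof -
  have "(\<lambda>r. ktrunc t G i j s r * f r j) = (\<lambda>r. G i j s r * vtrunc t f r j)" for i j s
    by (auto simp: fun_eq_iff ktrunc_def vtrunc_def)
  then show ?thesis
    by (simp add: kop_def)
qed

lemma kop_vtrunc_eq_0:
  assumes "\<forall>i j. volterra (G i j)" and "s \<le> t"
  shows "kop T G (vtrunc t f) s i = 0"
proof -
  have "(\<lambda>r. G i j s r * vtrunc t f r j) = (\<lambda>r. 0)" for j
    using assms by (auto simp: fun_eq_iff vtrunc_def volterra_def)
  then show ?thesis
    by (simp add: kop_def)
qed

lemma kadj_ktrunc_eq_0:
  assumes "s \<le> t"
  shows "kadj T (ktrunc t G) f s i = 0"
proof -
  have "(\<lambda>r. ktrunc t G j i r s * f r j) = (\<lambda>r. 0)" for j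
    using assms by (auto simp: fun_eq_iff ktrunc_def)
  then show ?thesis
    by (simp add: kadj_apply)
qed

lemma kadj_ktrunc:
  assumes "\<forall>i j. volterra (G i j)" and "t < s"
  shows "kadj T (ktrunc t G) f s i = kadj T G (vtrunc t f) s i"
proof -
  have "(\<lambda>r. ktrunc t G j i r s * f r j) = (\<lambda>r. G j i r s * vtrunc t f r j)" for j
    using assms by (auto simp: fun_eq_iff ktrunc_def vtrunc_def volterra_def)
  then show ?thesis
    by (simp add: kadj_apply)
qed

lemma truncated_form_eq:
  assumes "\<forall>i j. volterra (B i j)" and "\<forall>i j. volterra (Bbar i j)"
  shows "(\<Sum>i\<in>UNIV. f s i * (kop T (ktrunc t B) f s i + kadj T (ktrunc t Bbar) f s i))
       = (\<Sum>i\<in>UNIV. vtrunc t f s i * (kop T B (vtrunc t f) s i + kadj T Bbar (vtrunc t f) s i))"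
proof (cases "t < s")
  case True
  then show ?thesis
    using kadj_ktrunc[OF assms(2) True] by (simp add: kop_ktrunc vtrunc_def)
next
  case False
  then have "s \<le> t" by simp
  moreover have "vtrunc t f s i = 0" for i
    using False by (simp add: vtrunc_def)
  ultimately show ?thesis
    by (simp add: kop_ktrunc kop_vtrunc_eq_0[OF assms(1)] kadj_ktrunc_eq_0)
qed

lemma set_integrable_quadratic_form:
  assumes B: "\<forall>i j. L2kernel T (B i j)" and Bbar: "\<forall>i j. L2kernel T (Bbar i j)"
    and f: "L2vec T f"
  shows "set_integrable lborel {0..T}
    (\<lambda>s. \<Sum>i\<in>UNIV. f s i * (kop T B f s i + kadj T Bbar f s i + a i * f s i))"
proof -
  have fi: "L2fun T (\<lambda>s. f s i)" for i
    using f by (simp add: L2vec_def)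
  have "set_integrable lborel {0..T} (\<lambda>s.
      (\<Sum>j\<in>UNIV. f s i * (LINT r:{0..T}|lborel. B i j s r * f r j))
    + (\<Sum>j\<in>UNIV. f s i * (LINT r:{0..T}|lborel. Bbar j i r s * f r j))
    + a i * (f s i * f s i))" for i
    using set_integrable_kernel_term[OF B[rule_format] fi fi]
      set_integrable_kernel_term[OF L2kernel_transpose[OF Bbar[rule_format]] fi fi]
      L2fun_set_integrable_square[OF fi]
    by (intro set_integral_add set_integrable_sum set_integrable_mult_right) auto
  then show ?thesis
    by (intro set_integrable_sum)
      (simp add: kop_def kadj_apply sum_distrib_left distrib_left mult.left_commute)
qed

lemma truncated_form_coercive:
  fixes lam :: "'n::finite \<Rightarrow> real"
  assumes B: "\<forall>i j. volterra_L2 T (B i j)" and Bbar: "\<forall>i j. volterra_L2 T (Bbar i j)"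
    and coercive: "\<And>g. L2vec T g \<Longrightarrow>
      ipL2 T g (\<lambda>s i. kop T B g s i + kadj T Bbar g s i + 2 * lam i * g s i - c0 * g s i) \<ge> 0"
    and c_le: "c \<le> c0" "\<And>i. c \<le> 2 * lam i"
    and f: "L2vec T f"
  shows "ipL2 T f (\<lambda>s i. 2 * lam i * f s i + kop T (ktrunc t B) f s i
           + kadj T (ktrunc t Bbar) f s i) \<ge> c * ipL2 T f f"
proof -
  define g where "g = vtrunc t f"
  have g: "L2vec T g"
    unfolding g_def using f by (rule L2vec_vtrunc)
  have fi: "L2fun T (\<lambda>s. f s i)" and gi: "L2fun T (\<lambda>s. g s i)" for i
    using f g by (simp_all add: L2vec_def)
  define Q where "Q s = (\<Sum>i\<in>UNIV. g s i * (kop T B g s i + kadj T Bbar g s i + (2 * lam i - c0) * g s i))" for s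
  define R where "R s = (\<Sum>i\<in>UNIV. 2 * lam i * (f s i * f s i) - (2 * lam i - c0) * (g s i * g s i))" for s
  have Q: "set_integrable lborel {0..T} Q"
    unfolding Q_def using B Bbar g by (intro set_integrable_quadratic_form) (auto simp: volterra_L2_def)
  have R: "set_integrable lborel {0..T} R"
    unfolding R_def using L2fun_set_integrable_square[OF fi] L2fun_set_integrable_square[OF gi]
    by (intro set_integrable_sum set_integral_diff set_integrable_mult_right) auto
  have F: "set_integrable lborel {0..T} (\<lambda>s. c * (\<Sum>i\<in>UNIV. f s i * f s i))"
    using L2fun_set_integrable_square[OF fi] by (intro set_integrable_mult_right set_integrable_sum) auto
  have "(\<Sum>i\<in>UNIV. f s i * (2 * lam i * f s i + kop T (ktrunc t B) f s i + kadj T (ktrunc t Bbar) f s i))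
      = Q s + R s" for s
  proof -
    have "(\<Sum>i\<in>UNIV. f s i * (kop T (ktrunc t B) f s i + kadj T (ktrunc t Bbar) f s i))
        = (\<Sum>i\<in>UNIV. g s i * (kop T B g s i + kadj T Bbar g s i))"
      unfolding g_def using B Bbar by (intro truncated_form_eq) (auto simp: volterra_L2_def)
    then show ?thesis
      by (simp add: Q_def R_def algebra_simps sum.distrib sum_subtractf)
  qed
  then have "ipL2 T f (\<lambda>s i. 2 * lam i * f s i + kop T (ktrunc t B) f s i + kadj T (ktrunc t Bbar) f s i)
      = (LINT s:{0..T}|lborel. Q s) + (LINT s:{0..T}|lborel. R s)"
    using set_integral_add(2)[OF Q R] by (simp add: ipL2_def)
  moreover have "(LINT s:{0..T}|lborel. Q s) \<ge> 0"
    using coercive[OF g] by (simp add: ipL2_def Q_def algebra_simps)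
  moreover have "(LINT s:{0..T}|lborel. R s) \<ge> c * ipL2 T f f"
  proof -
    have "c * (f s i * f s i) \<le> 2 * lam i * (f s i * f s i) - (2 * lam i - c0) * (g s i * g s i)" for s i
    proof (cases "t < s")
      case True
      then have "2 * lam i * (f s i * f s i) - (2 * lam i - c0) * (g s i * g s i) = c0 * (f s i * f s i)"
        by (simp add: g_def vtrunc_def algebra_simps)
      then show ?thesis
        using c_le(1) by (simp add: mult_right_mono)
    next
      case False
      then show ?thesis
        using c_le(2)[of i] by (simp add: g_def vtrunc_def mult_right_mono)
    qed
    then have "c * (\<Sum>i\<in>UNIV. f s i * f s i) \<le> R s" for s
      unfolding R_def sum_distrib_left by (rule sum_mono)
    then show ?thesis
      using set_integral_mono[OF F R] by (simp add: ipL2_def)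
  qed
  ultimately show ?thesis
    by linarith
qed

theorem mainTheorem13:
  fixes T :: real
    and lam :: "'n::finite \<Rightarrow> real"
    and B Bbar :: "'n \<Rightarrow> 'n \<Rightarrow> real \<Rightarrow> real \<Rightarrow> real"
  assumes T_pos: "0 < T"
    and A_lam: "\<forall>i. lam i > 0"
    and A_B: "\<forall>i j. volterra_L2 T (B i j)"
    and A_Bbar: "\<forall>i j. volterra_L2 T (Bbar i j)"
    and A_diag: "\<forall>i. Bbar i i = B i i"
    and C: "\<exists>c0>0. \<forall>f. L2vec T f \<longrightarrow>
              ipL2 T f (\<lambda>s i. kop T B f s i + kadj T Bbar f s i + 2 * lam i * f s i - c0 * f s i) \<ge> 0"
  shows "\<exists>c0>0. \<forall>t\<in>{0..T}. \<forall>f. L2vec T f \<longrightarrow>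
           ipL2 T f (\<lambda>s i. 2 * lam i * f s i + kop T (ktrunc t B) f s i
                          + kadj T (ktrunc t Bbar) f s i) \<ge> c0 * ipL2 T f f"
proof -
  obtain c0 where "c0 > 0" and coercive: "\<And>f. L2vec T f \<Longrightarrow>
      ipL2 T f (\<lambda>s i. kop T B f s i + kadj T Bbar f s i + 2 * lam i * f s i - c0 * f s i) \<ge> 0"
    using C by blast
  define c where "c = min c0 (2 * Min (range lam))"
  have "c > 0"
    using \<open>c0 > 0\<close> A_lam by (simp add: c_def Min_gr_iff)
  moreover have "c \<le> c0" and "c \<le> 2 * lam i" for i
  proof -
    have "Min (range lam) \<le> lam i"
      by (simp add: Min_le)
    then show "c \<le> c0" and "c \<le> 2 * lam i"
      by (simp_all add: c_def min_le_iff_disj)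
  qed
  ultimately show ?thesis
    using truncated_form_coercive[OF A_B A_Bbar coercive] by blast
qed

end
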